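(* Let $(X,\rho)$ be a compact metric space with at least two points and let $T\colon X\to X$ be continuous and topologically weakly mixing. There exist numbers $\delta_d\in(0,1)$, $d\ge2$, and a Mycielski set $M\subset X$ such that for every $d\ge2$, all pairwise distinct $x_1,\dots,x_d\in M$ and all integers $s_1,\dots,s_d\ge0$, the $d$-tuple $(T^{s_1}x_1,\dots,T^{s_d}x_d)$ is $\delta_d$-Li-Yorke. Moreover $\omega(x,T)=X$ for every $x\in M$.
   Context: $T$ is topologically weakly mixing if $T\times T$ is topologically transitive. A Mycielski set is a countable union of Cantor sets. A $d$-tuple is $\delta$-Li-Yorke if $\liminf_n\max_{i,j}\rho(T^nx_i,T^nx_j)=0$ and $\limsup_n\min_{i\ne j}\rho(T^nx_i,T^nx_j)>\delta$. $\omega(x,T)$ is the $\omega$-limit set of $x$. *)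

theory Defs
  imports "HOL-Analysis.Analysis"
begin

definition top_transitive :: "'a::topological_space set \<Rightarrow> ('a \<Rightarrow> 'a) \<Rightarrow> bool" where
  "top_transitive X f \<longleftrightarrow>
     (\<forall>U V. openin (top_of_set X) U \<and> openin (top_of_set X) V \<and> U \<noteq> {} \<and> V \<noteq> {}
        \<longrightarrow> (\<exists>n. (f ^^ n) ` U \<inter> V \<noteq> {}))"

definition weakly_mixing :: "'a::topological_space set \<Rightarrow> ('a \<Rightarrow> 'a) \<Rightarrow> bool" where
  "weakly_mixing X T \<longleftrightarrow> top_transitive (X \<times> X) (\<lambda>(x, y). (T x, T y))"

definition cantor_set :: "'a::metric_space set \<Rightarrow> bool" where
  "cantor_set C \<longleftrightarrow> C \<noteq> {} \<and> compact C \<and> (\<forall>x\<in>C. x islimpt C) \<and>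
     (\<forall>S. S \<subseteq> C \<and> connected S \<longrightarrow> (\<exists>a. S \<subseteq> {a}))"

definition mycielski_set :: "'a::metric_space set \<Rightarrow> bool" where
  "mycielski_set M \<longleftrightarrow> (\<exists>\<C>. countable \<C> \<and> \<C> \<noteq> {} \<and> (\<forall>C\<in>\<C>. cantor_set C) \<and> M = \<Union>\<C>)"

definition li_yorke_tuple :: "('a::metric_space \<Rightarrow> 'a) \<Rightarrow> nat \<Rightarrow> real \<Rightarrow> (nat \<Rightarrow> 'a) \<Rightarrow> bool" where
  "li_yorke_tuple T d \<delta> x \<longleftrightarrow>
     liminf (\<lambda>n. ereal (Max {dist ((T ^^ n) (x i)) ((T ^^ n) (x j)) | i j. i < d \<and> j < d})) = 0 \<and>
     limsup (\<lambda>n. ereal (Min {dist ((T ^^ n) (x i)) ((T ^^ n) (x j)) | i j. i < d \<and> j < d \<and> i \<noteq> j}))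
       > ereal \<delta>"

definition omega_limit :: "('a::metric_space \<Rightarrow> 'a) \<Rightarrow> 'a \<Rightarrow> 'a set" where
  "omega_limit T x = {y. \<exists>r. strict_mono r \<and> (\<lambda>k. (T ^^ r k) x) \<longlonglongrightarrow> y}"

end

theory Submission
  imports Defs
begin

text \<open>
  The set \<open>M\<close> is the limit set of a Cantor scheme: at level \<open>m\<close> there are \<open>2^m\<close> disjoint
  compact cells of diameter at most \<open>2/(m+1)\<close>, indexed by binary words, each contained in its
  parent. Weak mixing implies mixing of all orders in Furstenberg's sense: for finitely many
  nonempty open pairs \<open>(U\<^sub>i, V\<^sub>i)\<close> there are arbitrarily large common times \<open>n\<close> with
  \<open>T\<^sup>n U\<^sub>i \<inter> V\<^sub>i \<noteq> {}\<close>. Hence, when building level \<open>m\<close>, the cells can be shrunk so that for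
  every choice of distinct cells, delays \<open>s\<^sub>i \<le> m\<close> and targets from a finite set, a single
  time \<open>n \<ge> m\<close> carries all delayed cells close to their targets. A common target makes the
  tuples proximal, fixed separated targets \<open>p\<^sub>0, \<dots>, p\<^bsub>d-1\<^esub>\<close> keep them \<open>\<delta>\<^sub>d\<close>-apart infinitely
  often, and targets from finer and finer nets make every orbit dense.
\<close>

lemma funpow_apply_swap: "(f ^^ m) ((f ^^ n) x) = (f ^^ n) ((f ^^ m) x)"
  by (metis funpow_add add.commute comp_apply)

lemma funpow_map_prod:
  fixes f :: "'a \<Rightarrow> 'a" and g :: "'b \<Rightarrow> 'b"
  shows "((\<lambda>(x, y). (f x, g y)) ^^ n) (a, b) = ((f ^^ n) a, (g ^^ n) b)"
  by (induction n) auto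

lemma openin_split_two:
  fixes X :: "'a::metric_space set"
  assumes perfect: "\<And>x. x \<in> X \<Longrightarrow> x islimpt X"
    and U: "openin (top_of_set X) U" "U \<noteq> {}"
  obtains U1 U2 where "openin (top_of_set X) U1" "openin (top_of_set X) U2"
    "U1 \<noteq> {}" "U2 \<noteq> {}" "U1 \<subseteq> U" "U2 \<subseteq> U" "U1 \<inter> U2 = {}"
proof -
  obtain x where x: "x \<in> U" using U(2) by blast
  then obtain e where e: "0 < e" "ball x e \<inter> X \<subseteq> U" "x \<in> X"
    using U(1) unfolding openin_contains_ball by blast
  then obtain y where y: "y \<in> X" "y \<noteq> x" "dist y x < e"
    using perfect unfolding islimpt_approachable by blast
  define \<rho> where "\<rho> = dist x y / 2"
  have "y \<in> U" using e y by (auto simp: dist_commute)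
  moreover have "ball x \<rho> \<inter> ball y \<rho> = {}"
    by (rule disjoint_ballI) (simp add: \<rho>_def)
  moreover have "0 < \<rho>" using y by (simp add: \<rho>_def)
  ultimately show thesis
    using x by (intro that[of "U \<inter> ball x \<rho>" "U \<inter> ball y \<rho>"]) (auto intro: openin_Int_open U(1))
qed

lemma openin_cball_subset:
  assumes "openin (top_of_set X) U" "U \<noteq> {}" "0 < e"
  obtains x \<rho> where "x \<in> U" "0 < \<rho>" "\<rho> \<le> e" "X \<inter> cball x \<rho> \<subseteq> U"
proof -
  obtain x where x: "x \<in> U" using assms(2) by blast
  then obtain \<epsilon> where "0 < \<epsilon>" "cball x \<epsilon> \<inter> X \<subseteq> U"
    using assms(1) unfolding openin_contains_cball by blast
  then show thesis
    using x assms(3) by (intro that[of x "min \<epsilon> e"]) auto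
qed

lemma decreasing_compact_Inter_nonempty:
  fixes F :: "nat \<Rightarrow> 'a::t2_space set"
  assumes "\<And>n. compact (F n)" "\<And>n. F n \<noteq> {}" "\<And>n. F (Suc n) \<subseteq> F n"
  shows "(\<Inter>n. F n) \<noteq> {}"
proof -
  have antimono: "F n \<subseteq> F m" if "m \<le> n" for m n
    using lift_Suc_antimono_le[of F, OF assms(3) that] .
  have "F 0 \<inter> (\<Inter>n. F n) \<noteq> {}"
  proof (rule compact_imp_fip_image[OF assms(1)])
    show "closed (F i)" for i using assms(1) by (rule compact_imp_closed)
    fix I :: "nat set" assume "finite I"
    then obtain n where n: "I \<subseteq> {..<n}" using finite_nat_bounded by blast
    have "F n \<subseteq> F i" if "i \<in> I" for i
      using n that by (intro antimono) auto
    moreover have "F n \<subseteq> F 0" using antimono by simp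
    ultimately show "F 0 \<inter> (\<Inter>i\<in>I. F i) \<noteq> {}" using assms(2)[of n] by blast
  qed
  then show ?thesis by blast
qed

lemma eventually_divide_Suc_less:
  fixes c e :: real
  assumes "0 < e"
  obtains N where "\<And>M. N \<le> M \<Longrightarrow> c / real (Suc M) < e"
proof -
  have "(\<lambda>M. c / real (Suc M)) \<longlonglongrightarrow> 0"
    using LIMSEQ_Suc[OF lim_const_over_n[of c]] by simp
  then have "\<forall>\<^sub>F M in sequentially. c / real (Suc M) < e"
    using assms by (rule order_tendstoD)
  then show thesis using that by (auto simp: eventually_sequentially)
qed

definition tuple_diameter :: "nat \<Rightarrow> (nat \<Rightarrow> 'a::metric_space) \<Rightarrow> real" where
  "tuple_diameter d x = Max {dist (x i) (x j) |i j. i < d \<and> j < d}"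

definition tuple_separation :: "nat \<Rightarrow> (nat \<Rightarrow> 'a::metric_space) \<Rightarrow> real" where
  "tuple_separation d x = Min {dist (x i) (x j) |i j. i < d \<and> j < d \<and> i \<noteq> j}"

lemma li_yorke_tuple_iff:
  "li_yorke_tuple T d \<delta> x \<longleftrightarrow>
     liminf (\<lambda>n. ereal (tuple_diameter d (\<lambda>i. (T ^^ n) (x i)))) = 0 \<and>
     ereal \<delta> < limsup (\<lambda>n. ereal (tuple_separation d (\<lambda>i. (T ^^ n) (x i))))"
  by (simp add: li_yorke_tuple_def tuple_diameter_def tuple_separation_def)

lemma finite_index_pairs:
  fixes d :: nat
  shows "finite {f i j |i j. i < d \<and> j < d \<and> P i j}"
  by (rule finite_subset[of _ "(\<lambda>(i, j). f i j) ` ({..<d} \<times> {..<d})"]) auto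

lemmas finite_index_pairs_all = finite_index_pairs[where P = "\<lambda>_ _. True", simplified]

lemma index_pairs_nonempty:
  fixes d :: nat
  assumes "2 \<le> d"
  shows "{f i j |i j. i < d \<and> j < d \<and> i \<noteq> j} \<noteq> {}"
proof -
  have "f 0 1 \<in> {f i j |i j. i < d \<and> j < d \<and> i \<noteq> j}"
    using assms by (intro CollectI exI[of _ 0] exI[of _ 1]) auto
  then show ?thesis by blast
qed

lemma tuple_diameter_nonneg:
  assumes "0 < d"
  shows "0 \<le> tuple_diameter d x"
proof -
  have "dist (x 0) (x 0) \<le> tuple_diameter d x"
    unfolding tuple_diameter_def using assms by (intro Max_ge finite_index_pairs_all) auto
  then show ?thesis by simp
qed

lemma tuple_diameter_less:
  assumes "0 < d" "\<And>i. i < d \<Longrightarrow> dist q (x i) < e"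
  shows "tuple_diameter d x < 2 * e"
  unfolding tuple_diameter_def
proof (subst Max_less_iff)
  show "{dist (x i) (x j) |i j. i < d \<and> j < d} \<noteq> {}" using assms(1) by blast
  show "\<forall>a\<in>{dist (x i) (x j) |i j. i < d \<and> j < d}. a < 2 * e"
  proof clarify
    fix i j assume "i < d" "j < d"
    then show "dist (x i) (x j) < 2 * e"
      using assms(2)[of i] assms(2)[of j] dist_triangle3[of "x i" "x j" q] by linarith
  qed
qed (rule finite_index_pairs_all)

lemma tuple_separation_le:
  "i < d \<Longrightarrow> j < d \<Longrightarrow> i \<noteq> j \<Longrightarrow> tuple_separation d x \<le> dist (x i) (x j)"
  unfolding tuple_separation_def by (intro Min_le finite_index_pairs) blast

lemma tuple_separation_greater:
  assumes "2 \<le> d" "\<And>i. i < d \<Longrightarrow> dist (p i) (x i) < e"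
  shows "tuple_separation d p - 2 * e < tuple_separation d x"
  unfolding tuple_separation_def[of d x]
proof (subst Min_gr_iff)
  show "{dist (x i) (x j) |i j. i < d \<and> j < d \<and> i \<noteq> j} \<noteq> {}"
    using assms(1) by (rule index_pairs_nonempty)
  show "\<forall>a\<in>{dist (x i) (x j) |i j. i < d \<and> j < d \<and> i \<noteq> j}. tuple_separation d p - 2 * e < a"
  proof clarify
    fix i j assume ij: "i < d" "j < d" "i \<noteq> j"
    have "dist (p i) (p j) \<le> dist (p i) (x i) + dist (x i) (x j) + dist (x j) (p j)"
      by (metis add.commute add_left_mono dist_triangle order_trans)
    then show "tuple_separation d p - 2 * e < dist (x i) (x j)"
      using tuple_separation_le[OF ij, of p] assms(2)[of i] assms(2)[of j] ij
      by (simp add: dist_commute)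
  qed
qed (rule finite_index_pairs)

lemma tuple_separation_pos:
  assumes "2 \<le> d" "inj_on x {..<d}"
  shows "0 < tuple_separation d x"
  unfolding tuple_separation_def
proof (subst Min_gr_iff)
  show "{dist (x i) (x j) |i j. i < d \<and> j < d \<and> i \<noteq> j} \<noteq> {}"
    using assms(1) by (rule index_pairs_nonempty)
  show "\<forall>a\<in>{dist (x i) (x j) |i j. i < d \<and> j < d \<and> i \<noteq> j}. 0 < a"
    using assms(2) by (auto simp: inj_on_def)
qed (rule finite_index_pairs)

lemma liminf_ereal_eq_0I:
  fixes f :: "nat \<Rightarrow> real"
  assumes "\<And>n. 0 \<le> f n" "\<And>e N. 0 < e \<Longrightarrow> \<exists>n\<ge>N. f n < e"
  shows "liminf (\<lambda>n. ereal (f n)) = 0"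
proof (rule antisym)
  have "liminf (\<lambda>n. ereal (f n)) \<le> ereal e" if "0 < e" for e
    unfolding liminf_SUP_INF
  proof (rule SUP_least)
    fix N
    obtain n where "n \<ge> N" "f n < e" using assms(2) \<open>0 < e\<close> by blast
    then show "(INF m\<in>{N..}. ereal (f m)) \<le> ereal e" by (intro INF_lower2[of n]) auto
  qed
  then show "liminf (\<lambda>n. ereal (f n)) \<le> 0"
    using ereal_le_epsilon2[of "liminf (\<lambda>n. ereal (f n))" 0] by simp
  have "0 \<le> (INF m\<in>{0..}. ereal (f m))" by (rule INF_greatest) (simp add: assms(1))
  also have "\<dots> \<le> liminf (\<lambda>n. ereal (f n))" unfolding liminf_SUP_INF by (rule SUP_upper) simp
  finally show "0 \<le> liminf (\<lambda>n. ereal (f n))" .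
qed

lemma limsup_ereal_greaterI:
  fixes f :: "nat \<Rightarrow> real"
  assumes "\<And>N. \<exists>n\<ge>N. b \<le> f n" "a < b"
  shows "ereal a < limsup (\<lambda>n. ereal (f n))"
proof -
  have "ereal a < ereal b" using assms(2) by simp
  also have "ereal b \<le> limsup (\<lambda>n. ereal (f n))"
    unfolding limsup_INF_SUP
  proof (rule INF_greatest)
    fix N
    obtain n where "n \<ge> N" "b \<le> f n" using assms(1) by blast
    then show "ereal b \<le> (SUP m\<in>{N..}. ereal (f m))" by (intro SUP_upper2[of n]) auto
  qed
  finally show ?thesis .
qed

lemma omega_limitI:
  assumes "\<And>e N. 0 < e \<Longrightarrow> \<exists>n\<ge>N. dist ((T ^^ n) x) y < e"
  shows "y \<in> omega_limit T x"
proof -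
  have "\<exists>r. \<forall>k. dist ((T ^^ r k) x) y < 1 / real (Suc k) \<and> r k < r (Suc k)"
  proof (rule dependent_nat_choice[where P = "\<lambda>k n. dist ((T ^^ n) x) y < 1 / real (Suc k)"
      and Q = "\<lambda>_ n n'. n < n'"])
    show "\<exists>n. dist ((T ^^ n) x) y < 1 / real (Suc 0)" using assms[of 1 0] by auto
  next
    fix n k assume "dist ((T ^^ n) x) y < 1 / real (Suc k)"
    obtain n' where "n' \<ge> Suc n" "dist ((T ^^ n') x) y < 1 / real (Suc (Suc k))"
      using assms[of "1 / real (Suc (Suc k))" "Suc n"] by auto
    then show "\<exists>n'. dist ((T ^^ n') x) y < 1 / real (Suc (Suc k)) \<and> n < n'" by auto
  qed
  then obtain r where r: "\<And>k. dist ((T ^^ r k) x) y < 1 / real (Suc k)" "\<And>k. r k < r (Suc k)"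
    by blast
  have "strict_mono r" using r(2) by (rule strict_monoI_Suc)
  moreover have "(\<lambda>k. dist ((T ^^ r k) x) y) \<longlonglongrightarrow> 0"
  proof (rule Lim_null_comparison[OF _ LIMSEQ_inverse_real_of_nat])
    have "norm (dist ((T ^^ r k) x) y) \<le> inverse (real (Suc k))" for k
      using r(1)[of k] by (simp add: inverse_eq_divide)
    then show "\<forall>\<^sub>F k in sequentially. norm (dist ((T ^^ r k) x) y) \<le> inverse (real (Suc k))"
      by (rule always_eventually[OF allI])
  qed
  then have "(\<lambda>k. (T ^^ r k) x) \<longlonglongrightarrow> y" by (rule tendsto_dist_iff[THEN iffD2])
  ultimately show ?thesis unfolding omega_limit_def by blast
qed

lemma omega_limit_subset:
  assumes "closed X" "T ` X \<subseteq> X" "x \<in> X"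
  shows "omega_limit T x \<subseteq> X"
proof
  fix y assume "y \<in> omega_limit T x"
  then obtain r where "(\<lambda>k. (T ^^ r k) x) \<longlonglongrightarrow> y" unfolding omega_limit_def by blast
  moreover have "(T ^^ n) x \<in> X" for n
    using assms(2,3) by (induction n) (auto simp: image_subset_iff)
  ultimately show "y \<in> X"
    using closed_sequentially[OF assms(1), of "\<lambda>k. (T ^^ r k) x"] by blast
qed

section \<open>Hitting times of weakly mixing systems\<close>

definition hitting_times :: "('a \<Rightarrow> 'a) \<Rightarrow> 'a set \<Rightarrow> 'a set \<Rightarrow> nat set" where
  "hitting_times T U V = {n. \<exists>a\<in>U. (T ^^ n) a \<in> V}"

locale weakly_mixing_system =
  fixes X :: "'a::metric_space set" and T :: "'a \<Rightarrow> 'a"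
  assumes compact_space: "compact X"
    and nontrivial: "\<exists>a\<in>X. \<exists>b\<in>X. a \<noteq> b"
    and maps_into: "T ` X \<subseteq> X"
    and continuous: "continuous_on X T"
    and mixing: "weakly_mixing X T"
begin

abbreviation nonempty_open :: "'a set \<Rightarrow> bool" where
  "nonempty_open U \<equiv> openin (top_of_set X) U \<and> U \<noteq> {}"

lemma iterate_in: "x \<in> X \<Longrightarrow> (T ^^ n) x \<in> X"
  by (induction n) (use maps_into in auto)

lemma continuous_on_iterate: "continuous_on X (T ^^ n)"
proof (induction n)
  case (Suc n)
  have "continuous_on X (T \<circ> (T ^^ n))"
    using Suc continuous_on_subset[OF continuous] iterate_in
    by (intro continuous_on_compose) (auto simp: image_subset_iff)
  then show ?case by simp
qed simp

lemma openin_iterate_preimage: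
  "openin (top_of_set X) U \<Longrightarrow> openin (top_of_set X) (X \<inter> (T ^^ n) -` U)"
  by (rule continuous_openin_preimage[OF continuous_on_iterate]) (auto simp: iterate_in)

lemma openin_iterate_preimage_open:
  "open S \<Longrightarrow> openin (top_of_set X) (X \<inter> (T ^^ n) -` S)"
  by (rule continuous_openin_preimage_gen[OF continuous_on_iterate])

lemma hitting_times_meet:
  assumes "nonempty_open U1" "nonempty_open V1" "nonempty_open U2" "nonempty_open V2"
  shows "hitting_times T U1 V1 \<inter> hitting_times T U2 V2 \<noteq> {}"
proof -
  have transitive: "top_transitive (X \<times> X) (\<lambda>(x, y). (T x, T y))"
    using mixing by (simp add: weakly_mixing_def)
  have "openin (top_of_set (X \<times> X)) (U1 \<times> U2)" "openin (top_of_set (X \<times> X)) (V1 \<times> V2)"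
    using assms by (simp_all add: openin_Times)
  moreover have "U1 \<times> U2 \<noteq> {}" "V1 \<times> V2 \<noteq> {}" using assms by auto
  ultimately obtain n where "((\<lambda>(x, y). (T x, T y)) ^^ n) ` (U1 \<times> U2) \<inter> (V1 \<times> V2) \<noteq> {}"
    using transitive unfolding top_transitive_def by presburger
  then obtain a b where "a \<in> U1" "b \<in> U2" "((T ^^ n) a, (T ^^ n) b) \<in> V1 \<times> V2"
    by (force simp: funpow_map_prod)
  then have "n \<in> hitting_times T U1 V1 \<inter> hitting_times T U2 V2"
    by (auto simp: hitting_times_def)
  then show ?thesis by blast
qed

lemma limpt_of_space: "x \<in> X \<Longrightarrow> x islimpt X"
proof (rule ccontr)
  assume x: "x \<in> X" "\<not> x islimpt X"
  then obtain S where S: "x \<in> S" "open S" "\<forall>y\<in>S. y \<in> X \<longrightarrow> y = x"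
    unfolding islimpt_def by auto
  then have "X \<inter> S = {x}" using x by blast
  then have "nonempty_open {x}" using openin_open_Int[OF S(2), of X] by simp
  moreover obtain b where "b \<in> X" "b \<noteq> x" using nontrivial by blast
  then have "nonempty_open (X - {x})"
    using openin_open_Int[of "- {x}" X] by (auto simp: Diff_eq open_Compl)
  ultimately have "hitting_times T {x} {x} \<inter> hitting_times T {x} (X - {x}) \<noteq> {}"
    by (intro hitting_times_meet)
  then show False by (auto simp: hitting_times_def)
qed

lemma surj_on_space: "T ` X = X"
proof (rule ccontr)
  assume "T ` X \<noteq> X"
  then obtain z where z: "z \<in> X" "z \<notin> T ` X" using maps_into by blast
  have closed: "closed (T ` X)"
    using compact_continuous_image[OF continuous compact_space] by (rule compact_imp_closed)
  have "open (- (T ` X))" using closed by (simp add: open_Compl)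
  then obtain z' where z': "z' \<in> X" "z' \<notin> T ` X" "z' \<noteq> z"
    using limpt_of_space[OF z(1)] z(2) unfolding islimpt_def by blast
  define e where "e = dist z z' / 2"
  define V1 where "V1 = X \<inter> (- (T ` X) \<inter> ball z e)"
  define V2 where "V2 = X \<inter> (- (T ` X) \<inter> ball z' e)"
  have "nonempty_open V1" "nonempty_open V2"
    using closed z z' by (auto simp: V1_def V2_def e_def intro!: openin_open_Int)
  then obtain n where "n \<in> hitting_times T V1 V1" "n \<in> hitting_times T V1 V2"
    using hitting_times_meet by blast
  then obtain b where b: "b \<in> V1" "(T ^^ n) b \<in> V2" by (auto simp: hitting_times_def)
  show False
  proof (cases n)
    case 0
    then have "dist z b < e" "dist z' b < e" using b by (auto simp: V1_def V2_def)
    then show False using dist_triangle2[of z z' b] by (simp add: e_def)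
  next
    case (Suc k)
    then have "(T ^^ n) b \<in> T ` X" using b(1) iterate_in by (auto simp: V1_def)
    then show False using b(2) by (auto simp: V2_def)
  qed
qed

lemma surj_on_iterate: "(T ^^ n) ` X = X"
proof (induction n)
  case (Suc n)
  have "(T ^^ Suc n) ` X = T ` ((T ^^ n) ` X)" by (simp add: image_comp)
  then show ?case using Suc surj_on_space by simp
qed simp

lemma nonempty_open_iterate_preimage:
  assumes "nonempty_open V"
  shows "nonempty_open (X \<inter> (T ^^ n) -` V)"
proof
  show "openin (top_of_set X) (X \<inter> (T ^^ n) -` V)"
    using assms by (intro openin_iterate_preimage) simp
  obtain v where "v \<in> V" using assms by blast
  moreover have "V \<subseteq> (T ^^ n) ` X" using assms openin_imp_subset surj_on_iterate by metis
  ultimately show "X \<inter> (T ^^ n) -` V \<noteq> {}" by blast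
qed

lemma hitting_times_unbounded:
  assumes "nonempty_open U" "nonempty_open V"
  shows "\<exists>n\<ge>k. n \<in> hitting_times T U V"
proof -
  have "nonempty_open X" using nontrivial by auto
  moreover have "nonempty_open (X \<inter> (T ^^ k) -` V)"
    using assms(2) by (rule nonempty_open_iterate_preimage)
  ultimately obtain n where "n \<in> hitting_times T U (X \<inter> (T ^^ k) -` V)"
    using hitting_times_meet[OF assms(1)] by blast
  then have "k + n \<in> hitting_times T U V" by (auto simp: hitting_times_def funpow_add)
  then show ?thesis by (metis le_add1)
qed

lemma hitting_times_Int:
  assumes "nonempty_open U1" "nonempty_open V1" "nonempty_open U2" "nonempty_open V2"
  obtains U V where "nonempty_open U" "nonempty_open V"
    "hitting_times T U V \<subseteq> hitting_times T U1 V1 \<inter> hitting_times T U2 V2"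
proof -
  obtain m where "m \<in> hitting_times T U1 U2" "m \<in> hitting_times T V1 V2"
    using hitting_times_meet assms by blast
  then obtain a b where ab: "a \<in> U1" "(T ^^ m) a \<in> U2" "b \<in> V1" "(T ^^ m) b \<in> V2"
    by (auto simp: hitting_times_def)
  define U where "U = U1 \<inter> (X \<inter> (T ^^ m) -` U2)"
  define V where "V = V1 \<inter> (X \<inter> (T ^^ m) -` V2)"
  have "a \<in> U" "b \<in> V"
    using assms ab openin_imp_subset[of euclidean X U1] openin_imp_subset[of euclidean X V1] by (auto simp: U_def V_def)
  moreover have "openin (top_of_set X) U" "openin (top_of_set X) V"
    unfolding U_def V_def using assms by (auto intro: openin_Int openin_iterate_preimage)
  ultimately have "nonempty_open U" "nonempty_open V" by auto
  moreover have "hitting_times T U V \<subseteq> hitting_times T U2 V2"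
  proof
    fix n assume "n \<in> hitting_times T U V"
    then obtain y where "y \<in> U" "(T ^^ n) y \<in> V" by (auto simp: hitting_times_def)
    then have "(T ^^ m) y \<in> U2" "(T ^^ n) ((T ^^ m) y) \<in> V2"
      by (auto simp: U_def V_def funpow_apply_swap)
    then show "n \<in> hitting_times T U2 V2" by (auto simp: hitting_times_def)
  qed
  moreover have "hitting_times T U V \<subseteq> hitting_times T U1 V1"
    by (auto simp: hitting_times_def U_def V_def)
  ultimately show thesis using that by blast
qed

lemma hitting_times_family:
  assumes "finite P" "\<forall>(U, V)\<in>P. nonempty_open U \<and> nonempty_open V"
  shows "\<exists>U0 V0. nonempty_open U0 \<and> nonempty_open V0 \<and>
    (\<forall>(U, V)\<in>P. hitting_times T U0 V0 \<subseteq> hitting_times T U V)"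
  using assms
proof (induction P rule: finite_induct)
  case empty
  have "nonempty_open X" using nontrivial by auto
  then show ?case by blast
next
  case (insert UV P)
  obtain U V where UV: "UV = (U, V)" by fastforce
  have UV_open: "nonempty_open U" "nonempty_open V" using insert.prems UV by auto
  obtain U0 V0 where UV0_open: "nonempty_open U0" "nonempty_open V0"
    and P: "\<forall>(U, V)\<in>P. hitting_times T U0 V0 \<subseteq> hitting_times T U V"
    using insert.IH insert.prems by blast
  obtain U' V' where "nonempty_open U'" "nonempty_open V'"
    and "hitting_times T U' V' \<subseteq> hitting_times T U0 V0 \<inter> hitting_times T U V"
    using hitting_times_Int[OF UV0_open UV_open] by blast
  then show ?case using P UV by fastforce
qed

lemma common_hitting_time:
  assumes "finite P" "\<forall>(U, V)\<in>P. nonempty_open U \<and> nonempty_open V"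
  shows "\<exists>n\<ge>k. \<forall>(U, V)\<in>P. n \<in> hitting_times T U V"
proof -
  obtain U0 V0 where "nonempty_open U0" "nonempty_open V0"
    and P: "\<forall>(U, V)\<in>P. hitting_times T U0 V0 \<subseteq> hitting_times T U V"
    using hitting_times_family[OF assms] by blast
  then obtain n where "n \<ge> k" "n \<in> hitting_times T U0 V0"
    using hitting_times_unbounded by blast
  then show ?thesis using P by blast
qed

end

section \<open>Steering cells of a Cantor scheme\<close>

definition words :: "nat \<Rightarrow> bool list set" where
  "words m = {w. length w = m}"

lemma finite_words: "finite (words m)"
  using finite_lists_length_eq[of "UNIV :: bool set" m] by (simp add: words_def)

lemma butlast_in_words: "v \<in> words (Suc m) \<Longrightarrow> butlast v \<in> words m"
  by (simp add: words_def)

definition steers :: "('a::metric_space \<Rightarrow> 'a) \<Rightarrow> nat \<Rightarrow> (bool list \<Rightarrow> 'a set) \<Rightarrow>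
    (bool list \<times> nat \<times> 'a) list \<Rightarrow> bool" where
  "steers T m K ts \<longleftrightarrow>
     (\<exists>n\<ge>m. \<forall>(w, s, q)\<in>set ts. \<forall>y\<in>K w. dist q ((T ^^ n) ((T ^^ s) y)) < 1 / real (Suc m))"

definition requirements :: "nat \<Rightarrow> 'a set \<Rightarrow> (bool list \<times> nat \<times> 'a) list set" where
  "requirements m Q = {ts. distinct (map fst ts) \<and> set ts \<subseteq> words m \<times> {..m} \<times> Q}"

lemma finite_requirements:
  assumes "finite Q"
  shows "finite (requirements m Q)"
proof (rule finite_subset)
  show "requirements m Q \<subseteq> {ts. set ts \<subseteq> words m \<times> {..m} \<times> Q \<and> distinct ts}"
    by (auto simp: requirements_def distinct_map)
  show "finite {ts. set ts \<subseteq> words m \<times> {..m} \<times> Q \<and> distinct ts}"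
    using assms finite_words by (intro finite_subset_distinct) auto
qed

lemma steers_mono:
  assumes "steers T m K ts" "\<And>w. w \<in> fst ` set ts \<Longrightarrow> K' w \<subseteq> K w"
  shows "steers T m K' ts"
proof -
  obtain n where "n \<ge> m"
    and n: "\<forall>(w, s, q)\<in>set ts. \<forall>y\<in>K w. dist q ((T ^^ n) ((T ^^ s) y)) < 1 / real (Suc m)"
    using assms(1) unfolding steers_def by blast
  have "\<forall>(w, s, q)\<in>set ts. \<forall>y\<in>K' w. dist q ((T ^^ n) ((T ^^ s) y)) < 1 / real (Suc m)"
  proof (clarify)
    fix w s q y assume ts: "(w, s, q) \<in> set ts" and "y \<in> K' w"
    then have "y \<in> K w" using assms(2)[of w] by force
    with n ts show "dist q ((T ^^ n) ((T ^^ s) y)) < 1 / real (Suc m)" by blast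
  qed
  with \<open>n \<ge> m\<close> show ?thesis unfolding steers_def by blast
qed

context weakly_mixing_system
begin

lemma common_steering_time:
  assumes cells: "\<forall>w\<in>words m. nonempty_open (\<sigma> w)" and ts: "set ts \<subseteq> words m \<times> UNIV \<times> X"
  shows "\<exists>n\<ge>m. \<forall>(w, s, q)\<in>set ts. \<exists>a\<in>\<sigma> w. dist q ((T ^^ n) ((T ^^ s) a)) < 1 / real (Suc m)"
proof -
  define V where "V s q = X \<inter> (T ^^ s) -` (X \<inter> ball q (1 / real (Suc m)))" for s q
  define P where "P = (\<lambda>(w, s, q). (\<sigma> w, V s q)) ` set ts"
  have "nonempty_open (\<sigma> w) \<and> nonempty_open (V s q)" if "(w, s, q) \<in> set ts" for w s q
  proof -
    have "w \<in> words m" "q \<in> X" using that ts by auto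
    then have "nonempty_open (X \<inter> ball q (1 / real (Suc m)))"
      using openin_open_Int[of "ball q (1 / real (Suc m))" X] by auto
    then have "nonempty_open (V s q)" unfolding V_def by (rule nonempty_open_iterate_preimage)
    then show ?thesis using cells \<open>w \<in> words m\<close> by blast
  qed
  then have "\<forall>(U, V)\<in>P. nonempty_open U \<and> nonempty_open V" by (auto simp: P_def)
  then obtain n where "n \<ge> m" and n: "\<forall>(U, V)\<in>P. n \<in> hitting_times T U V"
    using common_hitting_time[of P m] by (auto simp: P_def)
  have "\<exists>a\<in>\<sigma> w. dist q ((T ^^ n) ((T ^^ s) a)) < 1 / real (Suc m)" if "(w, s, q) \<in> set ts" for w s q
  proof -
    have "n \<in> hitting_times T (\<sigma> w) (V s q)" using n that by (force simp: P_def)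
    then show ?thesis by (auto simp: hitting_times_def V_def funpow_apply_swap)
  qed
  then show ?thesis using \<open>n \<ge> m\<close> by fast
qed

text \<open>Every cell named in the requirement is cut down to the points that the common time steers;
  since the words are distinct, \<open>map_of\<close> finds the unique triple of a cell.\<close>
lemma steer_open_cells:
  assumes cells: "\<forall>w\<in>words m. nonempty_open (\<sigma> w)"
    and ts: "distinct (map fst ts)" "set ts \<subseteq> words m \<times> UNIV \<times> X"
  shows "\<exists>\<sigma>'. \<sigma>' \<le> \<sigma> \<and> (\<forall>w\<in>words m. nonempty_open (\<sigma>' w)) \<and> steers T m \<sigma>' ts"
proof -
  obtain n where "n \<ge> m"
    and n: "\<forall>(w, s, q)\<in>set ts. \<exists>a\<in>\<sigma> w. dist q ((T ^^ n) ((T ^^ s) a)) < 1 / real (Suc m)"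
    using common_steering_time[OF cells ts(2)] by blast
  define W where "W s q = X \<inter> (T ^^ (n + s)) -` ball q (1 / real (Suc m))" for s q
  define \<sigma>' where "\<sigma>' w = (case map_of ts w of None \<Rightarrow> \<sigma> w | Some (s, q) \<Rightarrow> \<sigma> w \<inter> W s q)" for w
  have "\<sigma>' \<le> \<sigma>" by (auto simp: le_fun_def \<sigma>'_def split: option.split)
  moreover have "nonempty_open (\<sigma>' w)" if w: "w \<in> words m" for w
  proof (cases "map_of ts w")
    case None
    then show ?thesis using cells w by (simp add: \<sigma>'_def)
  next
    case (Some sq)
    then obtain s q where sq: "map_of ts w = Some (s, q)" by (cases sq) simp
    then obtain a where "a \<in> \<sigma> w" "dist q ((T ^^ n) ((T ^^ s) a)) < 1 / real (Suc m)"
      using n map_of_SomeD by fastforce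
    moreover have "\<sigma> w \<subseteq> X" using cells w openin_imp_subset by blast
    ultimately have "\<sigma>' w \<noteq> {}" using sq by (auto simp: \<sigma>'_def W_def funpow_add)
    moreover have "openin (top_of_set X) (\<sigma>' w)"
      using sq cells w by (auto simp: \<sigma>'_def W_def intro!: openin_Int openin_iterate_preimage_open)
    ultimately show ?thesis by blast
  qed
  moreover have "dist q ((T ^^ n) ((T ^^ s) y)) < 1 / real (Suc m)"
    if "(w, s, q) \<in> set ts" "y \<in> \<sigma>' w" for w s q y
  proof -
    have "map_of ts w = Some (s, q)" using ts(1) that(1) by simp
    then show ?thesis using that(2) by (simp add: \<sigma>'_def W_def funpow_add)
  qed
  then have "steers T m \<sigma>' ts" using \<open>n \<ge> m\<close> unfolding steers_def by fast
  ultimately show ?thesis by blast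
qed

lemma steer_open_cells_all:
  assumes "finite R" "\<forall>w\<in>words m. nonempty_open (\<sigma> w)"
    and "\<forall>ts\<in>R. distinct (map fst ts) \<and> set ts \<subseteq> words m \<times> UNIV \<times> X"
  shows "\<exists>\<sigma>'. \<sigma>' \<le> \<sigma> \<and> (\<forall>w\<in>words m. nonempty_open (\<sigma>' w)) \<and> (\<forall>ts\<in>R. steers T m \<sigma>' ts)"
  using assms
proof (induction R arbitrary: \<sigma> rule: finite_induct)
  case empty
  then show ?case by blast
next
  case (insert ts R)
  obtain \<sigma>1 where \<sigma>1: "\<sigma>1 \<le> \<sigma>" "\<forall>w\<in>words m. nonempty_open (\<sigma>1 w)" "steers T m \<sigma>1 ts"
    using steer_open_cells insert.prems by blast
  obtain \<sigma>2 where \<sigma>2: "\<sigma>2 \<le> \<sigma>1" "\<forall>w\<in>words m. nonempty_open (\<sigma>2 w)" "\<forall>ts\<in>R. steers T m \<sigma>2 ts"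
    using insert.IH[OF \<sigma>1(2)] insert.prems(2) by blast
  have "steers T m \<sigma>2 ts" using steers_mono[OF \<sigma>1(3)] \<sigma>2(1) by (auto simp: le_fun_def)
  moreover have "\<sigma>2 \<le> \<sigma>" using \<sigma>1(1) \<sigma>2(1) by (rule order_trans[rotated])
  ultimately show ?case using \<sigma>2 by blast
qed

definition admissible_level :: "nat \<Rightarrow> (bool list \<Rightarrow> 'a set) \<Rightarrow> bool" where
  "admissible_level m K \<longleftrightarrow>
     (\<forall>w\<in>words m. K w \<subseteq> X \<and> compact (K w) \<and> (\<exists>U. nonempty_open U \<and> U \<subseteq> K w) \<and>
        (\<forall>x\<in>K w. \<forall>y\<in>K w. dist x y \<le> 2 / real (Suc m))) \<and>
     (\<forall>w\<in>words m. \<forall>w'\<in>words m. w \<noteq> w' \<longrightarrow> K w \<inter> K w' = {})"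

lemma split_cells:
  assumes "admissible_level m K"
  shows "\<exists>\<sigma>. (\<forall>v\<in>words (Suc m). nonempty_open (\<sigma> v) \<and> \<sigma> v \<subseteq> K (butlast v)) \<and>
    (\<forall>v\<in>words (Suc m). \<forall>v'\<in>words (Suc m). v \<noteq> v' \<longrightarrow> \<sigma> v \<inter> \<sigma> v' = {})"
proof -
  have "\<exists>U1 U2. nonempty_open U1 \<and> nonempty_open U2 \<and> U1 \<subseteq> K w \<and> U2 \<subseteq> K w \<and> U1 \<inter> U2 = {}"
    if w: "w \<in> words m" for w
  proof -
    obtain U where U: "nonempty_open U" "U \<subseteq> K w"
      using assms w unfolding admissible_level_def by blast
    obtain U1 U2 where "nonempty_open U1" "nonempty_open U2" "U1 \<subseteq> U" "U2 \<subseteq> U" "U1 \<inter> U2 = {}"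
      using openin_split_two[OF limpt_of_space U(1)[THEN conjunct1] U(1)[THEN conjunct2]] by metis
    then show ?thesis using U(2) by blast
  qed
  then obtain U1 U2 where U: "\<And>w. w \<in> words m \<Longrightarrow> nonempty_open (U1 w) \<and> nonempty_open (U2 w) \<and>
      U1 w \<subseteq> K w \<and> U2 w \<subseteq> K w \<and> U1 w \<inter> U2 w = {}"
    by metis
  define \<sigma> where "\<sigma> v = (if last v then U1 (butlast v) else U2 (butlast v))" for v
  have cell: "nonempty_open (\<sigma> v) \<and> \<sigma> v \<subseteq> K (butlast v)" if "v \<in> words (Suc m)" for v
    using U[OF butlast_in_words[OF that]] by (simp add: \<sigma>_def)
  have "\<sigma> v \<inter> \<sigma> v' = {}" if v: "v \<in> words (Suc m)" "v' \<in> words (Suc m)" "v \<noteq> v'" for v v'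
  proof (cases "butlast v = butlast v'")
    case True
    have "v \<noteq> []" "v' \<noteq> []" using v by (auto simp: words_def)
    then have "v = butlast v @ [last v]" "v' = butlast v' @ [last v']" by simp_all
    then have "last v \<noteq> last v'" using True v(3) by force
    then show ?thesis using True U[OF butlast_in_words[OF v(1)]] by (auto simp: \<sigma>_def)
  next
    case False
    then have "K (butlast v) \<inter> K (butlast v') = {}"
      using assms butlast_in_words v by (simp add: admissible_level_def)
    then show ?thesis using cell v by blast
  qed
  then show ?thesis using cell by blast
qed

lemma closed_cells_within:
  assumes cells: "\<forall>v\<in>words k. nonempty_open (\<sigma> v)"
    and disjoint: "\<forall>v\<in>words k. \<forall>v'\<in>words k. v \<noteq> v' \<longrightarrow> \<sigma> v \<inter> \<sigma> v' = {}"
  shows "\<exists>K. admissible_level k K \<and> (\<forall>v\<in>words k. K v \<subseteq> \<sigma> v)"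
proof -
  have "\<exists>C. C \<subseteq> \<sigma> v \<and> C \<subseteq> X \<and> compact C \<and> (\<exists>U. nonempty_open U \<and> U \<subseteq> C) \<and>
    (\<forall>x\<in>C. \<forall>y\<in>C. dist x y \<le> 2 / real (Suc k))" if v: "v \<in> words k" for v
  proof -
    have "nonempty_open (\<sigma> v)" using cells v by blast
    then obtain x \<rho> where x: "x \<in> \<sigma> v" "0 < \<rho>" "\<rho> \<le> 1 / real (Suc k)" "X \<inter> cball x \<rho> \<subseteq> \<sigma> v"
      using openin_cball_subset[of X "\<sigma> v" "1 / real (Suc k)"] by auto
    have "x \<in> X" using x(1) \<open>nonempty_open (\<sigma> v)\<close> openin_imp_subset by blast
    have "nonempty_open (X \<inter> ball x \<rho>)"
      using \<open>x \<in> X\<close> x(2) openin_open_Int[of "ball x \<rho>" X] by auto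
    moreover have "dist y z \<le> 2 / real (Suc k)" if "y \<in> cball x \<rho>" "z \<in> cball x \<rho>" for y z
      using that x(3) dist_triangle3[of y z x] by simp
    ultimately show ?thesis
      using x(4) compact_Int_closed[OF compact_space closed_cball]
      by (intro exI[of _ "X \<inter> cball x \<rho>"]) auto
  qed
  then obtain K where K: "\<forall>v\<in>words k. K v \<subseteq> \<sigma> v \<and> K v \<subseteq> X \<and> compact (K v) \<and>
      (\<exists>U. nonempty_open U \<and> U \<subseteq> K v) \<and> (\<forall>x\<in>K v. \<forall>y\<in>K v. dist x y \<le> 2 / real (Suc k))"
    by metis
  moreover have "\<forall>v\<in>words k. \<forall>v'\<in>words k. v \<noteq> v' \<longrightarrow> K v \<inter> K v' = {}"
    using K disjoint by blast
  ultimately have "admissible_level k K" unfolding admissible_level_def by blast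
  then show ?thesis using K by blast
qed

lemma refine_level:
  assumes K: "admissible_level m K" and Q: "finite Q" "Q \<subseteq> X"
  shows "\<exists>K'. admissible_level (Suc m) K' \<and> (\<forall>v\<in>words (Suc m). K' v \<subseteq> K (butlast v)) \<and>
    (\<forall>ts\<in>requirements (Suc m) Q. steers T (Suc m) K' ts)"
proof -
  obtain \<sigma>0 where \<sigma>0: "\<forall>v\<in>words (Suc m). nonempty_open (\<sigma>0 v) \<and> \<sigma>0 v \<subseteq> K (butlast v)"
    and disjoint: "\<forall>v\<in>words (Suc m). \<forall>v'\<in>words (Suc m). v \<noteq> v' \<longrightarrow> \<sigma>0 v \<inter> \<sigma>0 v' = {}"
    using split_cells[OF K] by blast
  have "\<forall>ts\<in>requirements (Suc m) Q. distinct (map fst ts) \<and> set ts \<subseteq> words (Suc m) \<times> UNIV \<times> X"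
    using Q(2) by (auto simp: requirements_def)
  then obtain \<sigma> where \<sigma>: "\<sigma> \<le> \<sigma>0" "\<forall>v\<in>words (Suc m). nonempty_open (\<sigma> v)"
    "\<forall>ts\<in>requirements (Suc m) Q. steers T (Suc m) \<sigma> ts"
    using steer_open_cells_all[OF finite_requirements[OF Q(1)]] \<sigma>0 by blast
  have "\<forall>v\<in>words (Suc m). \<forall>v'\<in>words (Suc m). v \<noteq> v' \<longrightarrow> \<sigma> v \<inter> \<sigma> v' = {}"
    using disjoint \<sigma>(1) unfolding le_fun_def by blast
  then obtain K' where K': "admissible_level (Suc m) K'" "\<forall>v\<in>words (Suc m). K' v \<subseteq> \<sigma> v"
    using closed_cells_within[OF \<sigma>(2)] by blast
  have "\<forall>v\<in>words (Suc m). K' v \<subseteq> K (butlast v)"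
    using K'(2) \<sigma>(1) \<sigma>0 unfolding le_fun_def by blast
  moreover have "steers T (Suc m) K' ts" if "ts \<in> requirements (Suc m) Q" for ts
  proof (rule steers_mono)
    show "steers T (Suc m) \<sigma> ts" using \<sigma>(3) that by blast
    show "K' w \<subseteq> \<sigma> w" if "w \<in> fst ` set ts" for w
    proof -
      have "w \<in> words (Suc m)" using \<open>ts \<in> requirements (Suc m) Q\<close> that by (auto simp: requirements_def)
      then show ?thesis using K'(2) by blast
    qed
  qed
  ultimately show ?thesis using K'(1) by blast
qed

lemma steered_scheme_exists:
  assumes "\<And>m. finite (Q m)" "\<And>m. Q m \<subseteq> X"
  shows "\<exists>K. \<forall>m. admissible_level m (K m) \<and> (\<forall>v\<in>words (Suc m). K (Suc m) v \<subseteq> K m (butlast v)) \<and>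
    (\<forall>ts\<in>requirements (Suc m) (Q (Suc m)). steers T (Suc m) (K (Suc m)) ts)"
proof (rule dependent_nat_choice)
  obtain x where "x \<in> X" using nontrivial by blast
  have "nonempty_open (X \<inter> ball x 1)"
    using \<open>x \<in> X\<close> openin_open_Int[of "ball x 1" X] by auto
  moreover have "dist y z \<le> 2" if "y \<in> cball x 1" "z \<in> cball x 1" for y z
    using that dist_triangle3[of y z x] by simp
  moreover have "words 0 = {[]}" by (auto simp: words_def)
  ultimately have "admissible_level 0 (\<lambda>_. X \<inter> cball x 1)"
    using compact_Int_closed[OF compact_space closed_cball] by (auto simp: admissible_level_def)
  then show "\<exists>K. admissible_level 0 K" by blast
next
  fix K m assume "admissible_level m K"
  then show "\<exists>K'. admissible_level (Suc m) K' \<and> (\<forall>v\<in>words (Suc m). K' v \<subseteq> K (butlast v)) \<and>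
      (\<forall>ts\<in>requirements (Suc m) (Q (Suc m)). steers T (Suc m) K' ts)"
    using refine_level assms by blast
qed

end

section \<open>Cantor schemes\<close>

locale cantor_scheme =
  fixes K :: "nat \<Rightarrow> bool list \<Rightarrow> 'a::metric_space set"
  assumes compact_cell: "w \<in> words m \<Longrightarrow> compact (K m w)"
    and cell_nonempty: "w \<in> words m \<Longrightarrow> K m w \<noteq> {}"
    and cell_small: "w \<in> words m \<Longrightarrow> x \<in> K m w \<Longrightarrow> y \<in> K m w \<Longrightarrow> dist x y \<le> 2 / real (Suc m)"
    and cells_disjoint: "w \<in> words m \<Longrightarrow> w' \<in> words m \<Longrightarrow> w \<noteq> w' \<Longrightarrow> K m w \<inter> K m w' = {}"
    and cells_nested: "v \<in> words (Suc m) \<Longrightarrow> K (Suc m) v \<subseteq> K m (butlast v)"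
begin

definition limit_set :: "'a set" where
  "limit_set = (\<Inter>m. \<Union>w\<in>words m. K m w)"

lemma limit_set_in_cell: "x \<in> limit_set \<Longrightarrow> \<exists>w\<in>words m. x \<in> K m w"
  by (auto simp: limit_set_def)

lemma cell_unique: "w \<in> words m \<Longrightarrow> w' \<in> words m \<Longrightarrow> x \<in> K m w \<Longrightarrow> x \<in> K m w' \<Longrightarrow> w = w'"
  using cells_disjoint by blast

lemma compact_level: "compact (\<Union>w\<in>words m. K m w)"
  using finite_words compact_cell by (intro compact_UN) auto

lemma levels_decreasing: "m \<le> k \<Longrightarrow> (\<Union>v\<in>words k. K k v) \<subseteq> (\<Union>w\<in>words m. K m w)"
proof (rule lift_Suc_antimono_le[of "\<lambda>k. \<Union>v\<in>words k. K k v"])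
  fix n
  show "(\<Union>v\<in>words (Suc n). K (Suc n) v) \<subseteq> (\<Union>w\<in>words n. K n w)"
    using cells_nested butlast_in_words by blast
qed

text \<open>Follow the branch \<open>w, w0, w00, \<dots>\<close> below \<open>w\<close>.\<close>
lemma cell_meets_limit_set:
  assumes "w \<in> words m"
  shows "K m w \<inter> limit_set \<noteq> {}"
proof -
  define F where "F j = K (m + j) (w @ replicate j False)" for j
  have word: "w @ replicate j False \<in> words (m + j)" for j
    using assms by (simp add: words_def)
  have decreasing: "F (Suc j) \<subseteq> F j" for j
  proof -
    have "w @ replicate (Suc j) False = (w @ replicate j False) @ [False]"
      by (simp add: replicate_append_same)
    then have "butlast (w @ replicate (Suc j) False) = w @ replicate j False"
      by (simp only: butlast_snoc)
    then show ?thesis using cells_nested[of "w @ replicate (Suc j) False" "m + j"] word[of "Suc j"]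
      by (simp add: F_def)
  qed
  have "compact (F j)" "F j \<noteq> {}" for j
    using compact_cell[OF word] cell_nonempty[OF word] by (simp_all add: F_def)
  then have "(\<Inter>j. F j) \<noteq> {}" using decreasing by (rule decreasing_compact_Inter_nonempty)
  then obtain x where x: "\<And>j. x \<in> F j" by blast
  have "x \<in> (\<Union>v\<in>words k. K k v)" for k
  proof -
    have "x \<in> K (m + k) (w @ replicate k False)" using x[of k] by (simp add: F_def)
    then have "x \<in> (\<Union>v\<in>words (m + k). K (m + k) v)" using word[of k] by blast
    then show ?thesis using levels_decreasing[of k "m + k"] by auto
  qed
  then have "x \<in> limit_set" by (simp add: limit_set_def)
  moreover have "x \<in> K m w" using x[of 0] by (simp add: F_def)
  ultimately show ?thesis by blast
qed

lemma compact_limit_set: "compact limit_set"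
proof -
  have "closed limit_set"
    unfolding limit_set_def using compact_level by (intro closed_INT) (auto intro: compact_imp_closed)
  moreover have "limit_set \<subseteq> (\<Union>w\<in>words 0. K 0 w)" by (auto simp: limit_set_def)
  ultimately show ?thesis
    using compact_Int_closed[OF compact_level] by (metis inf.absorb_iff2)
qed

lemma limit_set_perfect:
  assumes x: "x \<in> limit_set"
  shows "x islimpt limit_set"
  unfolding islimpt_approachable
proof (intro allI impI)
  fix e :: real assume "0 < e"
  then obtain m where m: "2 / real (Suc m) < e"
    using eventually_divide_Suc_less[of e 2] by blast
  obtain u where u: "u \<in> words (Suc m)" "x \<in> K (Suc m) u"
    using limit_set_in_cell[OF x] by blast
  define u' where "u' = butlast u @ [\<not> last u]"
  have "u \<noteq> []" using u(1) by (auto simp: words_def)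
  then have "u' \<noteq> u" by (metis u'_def last_snoc)
  have u': "u' \<in> words (Suc m)" using u(1) by (simp add: u'_def words_def)
  obtain y where y: "y \<in> K (Suc m) u'" "y \<in> limit_set"
    using cell_meets_limit_set[OF u'] by blast
  have "y \<noteq> x" using cell_unique[OF u(1) u' u(2)] y(1) \<open>u' \<noteq> u\<close> by blast
  moreover have "butlast u' = butlast u" by (simp add: u'_def)
  then have "x \<in> K m (butlast u)" "y \<in> K m (butlast u)"
    using cells_nested[OF u(1)] cells_nested[OF u'] u(2) y(1) by auto
  then have "dist y x \<le> 2 / real (Suc m)"
    using cell_small butlast_in_words[OF u(1)] by blast
  ultimately show "\<exists>y\<in>limit_set. y \<noteq> x \<and> dist y x < e" using y(2) m by force
qed

lemma limit_set_totally_disconnected: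
  assumes S: "S \<subseteq> limit_set" "connected S"
  shows "\<exists>a. S \<subseteq> {a}"
proof -
  have "a = b" if ab: "a \<in> S" "b \<in> S" for a b
  proof (rule ccontr)
    assume "a \<noteq> b"
    then obtain m where m: "2 / real (Suc m) < dist a b"
      using eventually_divide_Suc_less[of "dist a b" 2] by auto
    obtain w where w: "w \<in> words m" "a \<in> K m w"
      using limit_set_in_cell ab S(1) by blast
    define A where "A = (\<Union>v\<in>words m - {w}. K m v)"
    have "closed (K m w)" "closed A"
      using compact_cell[THEN compact_imp_closed] w finite_words
      by (auto simp: A_def intro!: closed_UN)
    moreover have "S \<subseteq> K m w \<union> A"
      using limit_set_in_cell S(1) by (fastforce simp: A_def)
    moreover have "K m w \<inter> A \<inter> S = {}"
      using cells_disjoint w(1) by (fastforce simp: A_def)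
    moreover have "b \<notin> K m w" using cell_small[OF w] m by force
    then have "A \<inter> S \<noteq> {}" using \<open>S \<subseteq> K m w \<union> A\<close> ab(2) by blast
    moreover have "K m w \<inter> S \<noteq> {}" using w(2) ab(1) by blast
    ultimately show False using connected_closedD[OF S(2)] by blast
  qed
  then show ?thesis by blast
qed

lemma cells_separate_tuple:
  fixes x :: "nat \<Rightarrow> 'a"
  assumes "2 \<le> d" "inj_on x {..<d}"
  obtains N where "\<And>M W. N \<le> M \<Longrightarrow> (\<And>i. i < d \<Longrightarrow> W i \<in> words M \<and> x i \<in> K M (W i)) \<Longrightarrow>
    inj_on W {..<d}"
proof -
  obtain N where N: "\<And>M. N \<le> M \<Longrightarrow> 2 / real (Suc M) < tuple_separation d x"
    using eventually_divide_Suc_less[OF tuple_separation_pos[OF assms]] by blast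
  have "inj_on W {..<d}"
    if M: "N \<le> M" and W: "\<And>i. i < d \<Longrightarrow> W i \<in> words M \<and> x i \<in> K M (W i)" for M W
  proof (rule inj_onI, rule ccontr)
    fix i j assume ij: "i \<in> {..<d}" "j \<in> {..<d}" "W i = W j" "i \<noteq> j"
    then have "dist (x i) (x j) \<le> 2 / real (Suc M)" using cell_small W by fastforce
    moreover have "tuple_separation d x \<le> dist (x i) (x j)"
      using ij by (intro tuple_separation_le) auto
    ultimately show False using N[OF M] by linarith
  qed
  then show thesis using that by blast
qed

lemma cantor_set_limit_set: "cantor_set limit_set"
proof -
  have "limit_set \<noteq> {}"
    using cell_meets_limit_set[of "[]" 0] by (auto simp: words_def)
  then show ?thesis
    unfolding cantor_set_def
    using compact_limit_set limit_set_perfect limit_set_totally_disconnected by simp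
qed

end

section \<open>Li--Yorke tuples and dense orbits in the limit set\<close>

locale steered_cantor_scheme = cantor_scheme K for K :: "nat \<Rightarrow> bool list \<Rightarrow> 'a::metric_space set" +
  fixes T :: "'a \<Rightarrow> 'a" and Q :: "nat \<Rightarrow> 'a set"
  assumes steered: "ts \<in> requirements (Suc m) (Q (Suc m)) \<Longrightarrow> steers T (Suc m) (K (Suc m)) ts"
begin

lemma tuple_steerable:
  fixes x :: "nat \<Rightarrow> 'a" and s :: "nat \<Rightarrow> nat"
  assumes d: "2 \<le> d" and x: "\<forall>i<d. x i \<in> limit_set" "inj_on x {..<d}"
  obtains M0 where "\<And>M q. M0 \<le> M \<Longrightarrow> \<forall>i<d. q i \<in> Q M \<Longrightarrow>
    \<exists>n\<ge>M. \<forall>i<d. dist (q i) ((T ^^ n) ((T ^^ s i) (x i))) < 1 / real (Suc M)"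
proof -
  obtain N where N: "\<And>M W. N \<le> M \<Longrightarrow> (\<And>i. i < d \<Longrightarrow> W i \<in> words M \<and> x i \<in> K M (W i)) \<Longrightarrow>
      inj_on W {..<d}"
    using cells_separate_tuple[OF d x(2)] by blast
  define M0 where "M0 = Suc (N + Max (s ` {..<d}))"
  have "\<exists>n\<ge>M. \<forall>i<d. dist (q i) ((T ^^ n) ((T ^^ s i) (x i))) < 1 / real (Suc M)"
    if M: "M0 \<le> M" and q: "\<forall>i<d. q i \<in> Q M" for M q
  proof -
    have "\<forall>i<d. \<exists>w\<in>words M. x i \<in> K M w" using x(1) limit_set_in_cell by blast
    then obtain W where W: "\<And>i. i < d \<Longrightarrow> W i \<in> words M \<and> x i \<in> K M (W i)" by metis
    have "s i \<le> M" if "i < d" for i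
    proof -
      have "s i \<le> Max (s ` {..<d})" using that by (intro Max_ge) auto
      then show ?thesis using M by (simp add: M0_def)
    qed
    then have "set (map (\<lambda>i. (W i, s i, q i)) [0..<d]) \<subseteq> words M \<times> {..M} \<times> Q M"
      using W q by auto
    moreover have "distinct (map fst (map (\<lambda>i. (W i, s i, q i)) [0..<d]))"
      using N[OF _ W] M by (simp add: comp_def distinct_map atLeast0LessThan M0_def)
    ultimately have "map (\<lambda>i. (W i, s i, q i)) [0..<d] \<in> requirements M (Q M)"
      by (simp add: requirements_def)
    moreover obtain M' where "M = Suc M'" using M by (cases M) (auto simp: M0_def)
    ultimately have "steers T M (K M) (map (\<lambda>i. (W i, s i, q i)) [0..<d])" using steered by simp
    then obtain n where "n \<ge> M" and n: "\<forall>(w, s, q)\<in>(\<lambda>i. (W i, s i, q i)) ` {..<d}.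
        \<forall>y\<in>K M w. dist q ((T ^^ n) ((T ^^ s) y)) < 1 / real (Suc M)"
      by (auto simp: steers_def atLeast0LessThan)
    have "dist (q i) ((T ^^ n) ((T ^^ s i) (x i))) < 1 / real (Suc M)" if "i < d" for i
      using n W[OF that] that by fastforce
    then show ?thesis using \<open>n \<ge> M\<close> by blast
  qed
  then show thesis using that by blast
qed

lemma limit_set_tuple_proximal:
  fixes x :: "nat \<Rightarrow> 'a" and s :: "nat \<Rightarrow> nat"
  assumes "2 \<le> d" "\<forall>i<d. x i \<in> limit_set" "inj_on x {..<d}" "\<And>m. 0 < m \<Longrightarrow> p \<in> Q m"
  shows "liminf (\<lambda>n. ereal (tuple_diameter d (\<lambda>i. (T ^^ n) ((T ^^ s i) (x i))))) = 0"
proof (rule liminf_ereal_eq_0I)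
  show "0 \<le> tuple_diameter d (\<lambda>i. (T ^^ n) ((T ^^ s i) (x i)))" for n
    using assms(1) by (intro tuple_diameter_nonneg) simp
  fix e :: real and N assume "0 < e"
  then obtain M1 where M1: "\<And>M. M1 \<le> M \<Longrightarrow> 2 / real (Suc M) < e"
    using eventually_divide_Suc_less by blast
  obtain M0 where M0: "\<And>M q. M0 \<le> M \<Longrightarrow> \<forall>i<d. q i \<in> Q M \<Longrightarrow>
      \<exists>n\<ge>M. \<forall>i<d. dist (q i) ((T ^^ n) ((T ^^ s i) (x i))) < 1 / real (Suc M)"
    using tuple_steerable[OF assms(1-3)] by blast
  define M where "M = Suc (M0 + M1 + N)"
  have M: "M0 \<le> M" "M1 \<le> M" "N \<le> M" "0 < M" by (simp_all add: M_def)
  then have "\<forall>i<d. p \<in> Q M" using assms(4) by blast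
  then obtain n where "n \<ge> M" and n: "\<forall>i<d. dist p ((T ^^ n) ((T ^^ s i) (x i))) < 1 / real (Suc M)"
    using M0[of M "\<lambda>_. p"] M(1) by blast
  have "tuple_diameter d (\<lambda>i. (T ^^ n) ((T ^^ s i) (x i))) < 2 * (1 / real (Suc M))"
    using assms(1) n by (intro tuple_diameter_less) auto
  also have "\<dots> < e" using M1[OF M(2)] by simp
  finally show "\<exists>n\<ge>N. tuple_diameter d (\<lambda>i. (T ^^ n) ((T ^^ s i) (x i))) < e"
    using \<open>n \<ge> M\<close> M(3) le_trans by blast
qed

lemma limit_set_tuple_separated:
  fixes x p :: "nat \<Rightarrow> 'a" and s :: "nat \<Rightarrow> nat"
  assumes "2 \<le> d" "\<forall>i<d. x i \<in> limit_set" "inj_on x {..<d}"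
    and "inj_on p {..<d}" "\<And>m i. i < m \<Longrightarrow> p i \<in> Q m"
    and "\<delta> < tuple_separation d p / 2"
  shows "ereal \<delta> < limsup (\<lambda>n. ereal (tuple_separation d (\<lambda>i. (T ^^ n) ((T ^^ s i) (x i)))))"
proof (rule limsup_ereal_greaterI[OF _ assms(6)])
  fix N
  have "0 < tuple_separation d p / 2" using tuple_separation_pos[OF assms(1,4)] by simp
  then obtain M1 where M1: "\<And>M. M1 \<le> M \<Longrightarrow> 2 / real (Suc M) < tuple_separation d p / 2"
    using eventually_divide_Suc_less by blast
  obtain M0 where M0: "\<And>M q. M0 \<le> M \<Longrightarrow> \<forall>i<d. q i \<in> Q M \<Longrightarrow>
      \<exists>n\<ge>M. \<forall>i<d. dist (q i) ((T ^^ n) ((T ^^ s i) (x i))) < 1 / real (Suc M)"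
    using tuple_steerable[OF assms(1-3)] by blast
  define M where "M = M0 + M1 + N + d"
  have M: "M0 \<le> M" "M1 \<le> M" "N \<le> M" "d \<le> M" by (simp_all add: M_def)
  then have "\<forall>i<d. p i \<in> Q M" using assms(5) by auto
  then obtain n where "n \<ge> M" and n: "\<forall>i<d. dist (p i) ((T ^^ n) ((T ^^ s i) (x i))) < 1 / real (Suc M)"
    using M0[of M p] M(1) by blast
  have "tuple_separation d p - 2 * (1 / real (Suc M)) < tuple_separation d (\<lambda>i. (T ^^ n) ((T ^^ s i) (x i)))"
    using assms(1) n by (intro tuple_separation_greater) auto
  moreover have "2 / real (Suc M) < tuple_separation d p / 2" using M1[OF M(2)] .
  ultimately have "tuple_separation d p / 2 \<le> tuple_separation d (\<lambda>i. (T ^^ n) ((T ^^ s i) (x i)))"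
    by simp
  then show "\<exists>n\<ge>N. tuple_separation d p / 2 \<le> tuple_separation d (\<lambda>i. (T ^^ n) ((T ^^ s i) (x i)))"
    using \<open>n \<ge> M\<close> M(3) le_trans by blast
qed

lemma limit_set_omega_limit:
  assumes x: "x \<in> limit_set" and y: "y \<in> S"
    and dense: "\<And>m. S \<subseteq> (\<Union>q\<in>Q m. ball q (1 / real (Suc m)))"
  shows "y \<in> omega_limit T x"
proof (rule omega_limitI)
  fix e :: real and N assume "0 < e"
  then obtain M1 where M1: "\<And>M. M1 \<le> M \<Longrightarrow> 2 / real (Suc M) < e"
    using eventually_divide_Suc_less by blast
  define M where "M = Suc (M1 + N)"
  have "y \<in> (\<Union>q\<in>Q M. ball q (1 / real (Suc M)))" using dense y by blast
  then obtain q where q: "q \<in> Q M" "dist q y < 1 / real (Suc M)" by auto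
  obtain w where w: "w \<in> words M" "x \<in> K M w" using limit_set_in_cell[OF x] by blast
  have "[(w, 0, q)] \<in> requirements M (Q M)" using w q by (simp add: requirements_def)
  then have "steers T M (K M) [(w, 0, q)]" using steered by (simp add: M_def)
  then obtain n where "n \<ge> M" "dist q ((T ^^ n) x) < 1 / real (Suc M)"
    using w(2) unfolding steers_def by auto
  then have "dist ((T ^^ n) x) y < 2 / real (Suc M)"
    using q(2) dist_triangle3[of "(T ^^ n) x" y q] by simp
  also have "\<dots> < e" using M1[of M] by (simp add: M_def)
  finally have "dist ((T ^^ n) x) y < e" .
  moreover have "N \<le> n" using \<open>n \<ge> M\<close> by (simp add: M_def)
  ultimately show "\<exists>n\<ge>N. dist ((T ^^ n) x) y < e" by blast
qed

lemma limit_set_li_yorke: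
  fixes x p :: "nat \<Rightarrow> 'a" and s :: "nat \<Rightarrow> nat"
  assumes "2 \<le> d" "\<forall>i<d. x i \<in> limit_set" "inj_on x {..<d}"
    and "inj_on p {..<d}" "\<And>m i. i < m \<Longrightarrow> p i \<in> Q m"
    and "\<delta> < tuple_separation d p / 2"
  shows "li_yorke_tuple T d \<delta> (\<lambda>i. (T ^^ s i) (x i))"
  unfolding li_yorke_tuple_iff
  using limit_set_tuple_proximal[OF assms(1-3) assms(5)[where i = 0]]
    limit_set_tuple_separated[OF assms] by blast

end

lemma mycielski_set_cantor_set: "cantor_set C \<Longrightarrow> mycielski_set C"
  unfolding mycielski_set_def by (intro exI[of _ "{C}"]) simp

definition li_yorke_constant :: "(nat \<Rightarrow> 'a::metric_space) \<Rightarrow> nat \<Rightarrow> real" where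
  "li_yorke_constant p d = min (1 / 2) (tuple_separation d p / 4)"

lemma li_yorke_constant_bounds:
  assumes "2 \<le> d" "inj_on p {..<d}"
  shows "0 < li_yorke_constant p d" "li_yorke_constant p d < 1"
    "li_yorke_constant p d < tuple_separation d p / 2"
  using tuple_separation_pos[OF assms] by (simp_all add: li_yorke_constant_def min_def)

context weakly_mixing_system
begin

lemma infinite_space: "infinite X"
  using nontrivial limpt_of_space islimpt_finite by blast

lemma targets_exist:
  obtains p :: "nat \<Rightarrow> 'a" and Q where "inj p" "\<And>m i. i < m \<Longrightarrow> p i \<in> Q m"
    "\<And>m. finite (Q m)" "\<And>m. Q m \<subseteq> X" "\<And>m. X \<subseteq> (\<Union>q\<in>Q m. ball q (1 / real (Suc m)))"
proof -
  obtain p :: "nat \<Rightarrow> 'a" where p: "inj p" "range p \<subseteq> X"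
    using infinite_countable_subset[OF infinite_space] by blast
  have "\<exists>N. finite N \<and> N \<subseteq> X \<and> X \<subseteq> (\<Union>q\<in>N. ball q (1 / real (Suc m)))" for m
    using seq_compact_imp_totally_bounded[OF compact_imp_seq_compact[OF compact_space]] by simp
  then obtain net where net: "\<And>m. finite (net m) \<and> net m \<subseteq> X \<and>
      X \<subseteq> (\<Union>q\<in>net m. ball q (1 / real (Suc m)))"
    by metis
  have "X \<subseteq> (\<Union>q\<in>net m \<union> p ` {..<m}. ball q (1 / real (Suc m)))" for m
    using net[of m] by blast
  then show thesis
    using p net by (intro that[of p "\<lambda>m. net m \<union> p ` {..<m}"]) auto
qed

lemma cantor_scheme_of_admissible:
  assumes "\<And>m. admissible_level m (K m)"
    and "\<And>m v. v \<in> words (Suc m) \<Longrightarrow> K (Suc m) v \<subseteq> K m (butlast v)"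
  shows "cantor_scheme K"
proof
  fix m w assume w: "w \<in> words m"
  then show "compact (K m w)" "K m w \<noteq> {}"
    using assms(1)[of m] by (auto simp: admissible_level_def)
  show "dist x y \<le> 2 / real (Suc m)" if "x \<in> K m w" "y \<in> K m w" for x y
    using assms(1)[of m] w that unfolding admissible_level_def by blast
  show "K m w \<inter> K m w' = {}" if "w' \<in> words m" "w \<noteq> w'" for w'
    using assms(1)[of m] w that unfolding admissible_level_def by blast
qed (rule assms(2))

lemma steered_cantor_scheme_exists:
  assumes "\<And>m. finite (Q m)" "\<And>m. Q m \<subseteq> X"
  obtains K where "steered_cantor_scheme K T Q" "cantor_scheme.limit_set K \<subseteq> X"
proof -
  obtain K where K: "\<And>m. admissible_level m (K m)"
      "\<And>m v. v \<in> words (Suc m) \<Longrightarrow> K (Suc m) v \<subseteq> K m (butlast v)"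
      "\<And>m ts. ts \<in> requirements (Suc m) (Q (Suc m)) \<Longrightarrow> steers T (Suc m) (K (Suc m)) ts"
  proof -
    have "\<exists>K. \<forall>m. admissible_level m (K m) \<and> (\<forall>v\<in>words (Suc m). K (Suc m) v \<subseteq> K m (butlast v)) \<and>
      (\<forall>ts\<in>requirements (Suc m) (Q (Suc m)). steers T (Suc m) (K (Suc m)) ts)"
      using assms by (rule steered_scheme_exists)
    then show thesis using that by blast
  qed
  have scheme: "cantor_scheme K" using K(1,2) by (rule cantor_scheme_of_admissible)
  then interpret cantor_scheme K .
  have "limit_set \<subseteq> X"
  proof
    fix x assume "x \<in> limit_set"
    then obtain w where "w \<in> words 0" "x \<in> K 0 w" using limit_set_in_cell by blast
    then show "x \<in> X" using K(1)[of 0] unfolding admissible_level_def by blast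
  qed
  with steered_cantor_scheme.intro[OF scheme steered_cantor_scheme_axioms.intro[OF K(3)]]
  show thesis by (rule that)
qed

end

theorem mainTheorem10:
  fixes X :: "'a::metric_space set" and T :: "'a \<Rightarrow> 'a"
  assumes "compact X"
    and "\<exists>a\<in>X. \<exists>b\<in>X. a \<noteq> b"
    and "T ` X \<subseteq> X"
    and "continuous_on X T"
    and "weakly_mixing X T"
  shows "\<exists>(\<delta>::nat \<Rightarrow> real) M.
           (\<forall>d\<ge>2. 0 < \<delta> d \<and> \<delta> d < 1) \<and> M \<subseteq> X \<and> mycielski_set M \<and>
           (\<forall>d\<ge>2. \<forall>(x::nat \<Rightarrow> 'a) (s::nat \<Rightarrow> nat).
               (\<forall>i<d. x i \<in> M) \<and> inj_on x {..<d} \<longrightarrow>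
               li_yorke_tuple T d (\<delta> d) (\<lambda>i. (T ^^ s i) (x i))) \<and>
           (\<forall>x\<in>M. omega_limit T x = X)"
proof -
  interpret weakly_mixing_system X T using assms by unfold_locales
  obtain p Q where p: "inj p" "\<And>m i. i < m \<Longrightarrow> p i \<in> Q m"
    and Q: "\<And>m. finite (Q m)" "\<And>m. Q m \<subseteq> X" "\<And>m. X \<subseteq> (\<Union>q\<in>Q m. ball q (1 / real (Suc m)))"
    using targets_exist by metis
  obtain K where "steered_cantor_scheme K T Q" and M: "cantor_scheme.limit_set K \<subseteq> X"
    by (rule steered_cantor_scheme_exists[OF Q(1,2)])
  interpret steered_cantor_scheme K T Q by fact
  have p_inj: "inj_on p {..<d}" for d using p(1) by (rule inj_on_subset) simp
  have "\<forall>d\<ge>2. 0 < li_yorke_constant p d \<and> li_yorke_constant p d < 1"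
    using li_yorke_constant_bounds p_inj by blast
  moreover have "\<forall>d\<ge>2. \<forall>x s. (\<forall>i<d. x i \<in> limit_set) \<and> inj_on x {..<d} \<longrightarrow>
      li_yorke_tuple T d (li_yorke_constant p d) (\<lambda>i. (T ^^ s i) (x i))"
    using limit_set_li_yorke[OF _ _ _ p_inj p(2) li_yorke_constant_bounds(3)[OF _ p_inj]] by blast
  moreover have "\<forall>x\<in>limit_set. omega_limit T x = X"
    using omega_limit_subset[OF compact_imp_closed[OF compact_space] maps_into] M
      limit_set_omega_limit[OF _ _ Q(3)] by blast
  ultimately show ?thesis
    using M mycielski_set_cantor_set[OF cantor_set_limit_set] by blast
qed

end
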